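(* Let $A$ be a commutative $\mathbb{R}$-algebra and $A^2 \subseteq A$ the subsemiring of all sums of squares. Let $M \subseteq A$ be a quadratic module for which there is $v \in A^2$ such that for every $a \in A^2$ there is $p \in \mathbb{R}_+[X]$ with $p(v) - a \in M$. Then the following are equivalent for $a \in A$: (1) $f(a) \geq 0$ for every algebra homomorphism $f : A \to \mathbb{R}$ with $f(M) \subseteq \mathbb{R}_+$. (2) For every $r \in \mathbb{R}_+$ and $\varepsilon > 0$, there exist a polynomial $q \in \mathbb{R}_+[X]$ and an element $w \in A^2$ such that $q(r) \leq \varepsilon$ and $(1 + w)\,(a + q(v)) \in M$.
   Context: A quadratic module in $A$ is a subset $M \subseteq A$ with $1 \in M$ which is closed under addition and under multiplication by elements of $A^2$ (sums of squares). *)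

theory Defs
  imports "HOL-Computational_Algebra.Polynomial"
begin

definition sos :: "'a::comm_ring_1 set" where
  "sos = {y. \<exists>I :: nat set. \<exists>g. finite I \<and> y = (\<Sum>i\<in>I. (g i)^2)}"

definition quadratic_module :: "'a::comm_ring_1 set \<Rightarrow> bool" where
  "quadratic_module M \<longleftrightarrow> 1 \<in> M \<and> (\<forall>x\<in>M. \<forall>y\<in>M. x + y \<in> M)
     \<and> (\<forall>s\<in>sos. \<forall>x\<in>M. s * x \<in> M)"

definition nonneg_poly :: "real poly \<Rightarrow> bool" where
  "nonneg_poly p \<longleftrightarrow> (\<forall>i. coeff p i \<ge> 0)"

definition peval :: "real poly \<Rightarrow> 'a::{comm_ring_1,real_algebra_1} \<Rightarrow> 'a" where
  "peval p x = poly (map_poly of_real p) x"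

definition alg_hom_real :: "('a::{comm_ring_1,real_algebra_1} \<Rightarrow> real) \<Rightarrow> bool" where
  "alg_hom_real f \<longleftrightarrow> (\<forall>x y. f (x + y) = f x + f y) \<and> (\<forall>c x. f (c *\<^sub>R x) = c * f x)
     \<and> (\<forall>x y. f (x * y) = f x * f y) \<and> f 1 = 1"

end

(* Direction (2) => (1): apply a character f to (1 + w) (a + q v) and take r = f v.

   Direction (1) => (2): for fixed r >= 0, the elements satisfying (2) at r form a quadratic module
   N containing M which is saturated ((1 + s) x in N with s a sum of squares forces x in N) and
   closed (x + d in N for all reals d > 0 forces x in N). N is Archimedean: r + 1 - v lies in N,
   since 1 - u + u^(n+2) is a sum of squares for every sum of squares u, and v dominates all
   squares. If some b is not in N, the saturated quadratic module generated by N and -b avoids -1;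
   by Zorn it extends to a maximal such module, which is an Archimedean ordering, and taking
   standard parts with respect to an Archimedean ordering is a real character nonnegative on it.
   Hence an element outside N is negative under some character nonnegative on M. *)

theory Submission
  imports Defs
begin

section \<open>Sums of squares and quadratic modules\<close>

lemma sosI: "finite (I :: nat set) \<Longrightarrow> y = (\<Sum>i\<in>I. (g i)\<^sup>2) \<Longrightarrow> y \<in> sos"
  unfolding sos_def by blast

lemma sosE:
  assumes "y \<in> sos"
  obtains I :: "nat set" and g :: "nat \<Rightarrow> 'a::comm_ring_1" where "finite I" "y = (\<Sum>i\<in>I. (g i)\<^sup>2)"
  using assms unfolding sos_def by blast

lemma sos_0: "0 \<in> sos"
  by (rule sosI[of "{}"]) simp_all

lemma sos_square: "x\<^sup>2 \<in> sos"
  by (rule sosI[of "{0}" _ "\<lambda>_. x"]) simp_all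

lemma sos_1: "1 \<in> sos"
  using sos_square[of 1] by simp

lemma sos_add:
  assumes "a \<in> sos" "b \<in> sos"
  shows "a + b \<in> sos"
proof -
  obtain I g where I: "finite (I :: nat set)" "a = (\<Sum>i\<in>I. (g i)\<^sup>2)" using assms(1) by (rule sosE)
  obtain J h where J: "finite (J :: nat set)" "b = (\<Sum>j\<in>J. (h j)\<^sup>2)" using assms(2) by (rule sosE)
  define k where "k n = (if even n then g (n div 2) else h (n div 2))" for n :: nat
  have "(\<Sum>n\<in>(\<lambda>i. 2 * i) ` I \<union> (\<lambda>j. 2 * j + 1) ` J. (k n)\<^sup>2)
      = (\<Sum>n\<in>(\<lambda>i. 2 * i) ` I. (k n)\<^sup>2) + (\<Sum>n\<in>(\<lambda>j. 2 * j + 1) ` J. (k n)\<^sup>2)"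
    using I J by (intro sum.union_disjoint) (auto, presburger)
  also have "\<dots> = a + b"
    using I J by (simp add: sum.reindex inj_on_def k_def)
  finally show ?thesis
    using I J by (intro sosI[of "(\<lambda>i. 2 * i) ` I \<union> (\<lambda>j. 2 * j + 1) ` J" _ k]) simp_all
qed

lemma sos_sum: "finite S \<Longrightarrow> (\<And>i. i \<in> S \<Longrightarrow> f i \<in> sos) \<Longrightarrow> sum f S \<in> sos"
  by (induction S rule: finite_induct) (auto intro: sos_0 sos_add)

lemma sos_mult:
  assumes "a \<in> sos" "b \<in> sos"
  shows "a * b \<in> sos"
proof -
  have square_mult: "x\<^sup>2 * b \<in> sos" for x
  proof -
    obtain J h where J: "finite (J :: nat set)" "b = (\<Sum>j\<in>J. (h j)\<^sup>2)" using assms(2) by (rule sosE)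
    then show ?thesis
      by (intro sosI[of J _ "\<lambda>j. x * h j"]) (simp_all add: sum_distrib_left power_mult_distrib)
  qed
  obtain I g where "finite (I :: nat set)" "a = (\<Sum>i\<in>I. (g i)\<^sup>2)" using assms(1) by (rule sosE)
  then show ?thesis
    by (simp add: sum_distrib_right sos_sum square_mult)
qed

lemma sos_power: "a \<in> sos \<Longrightarrow> a ^ n \<in> sos"
  by (induction n) (auto intro: sos_1 sos_mult)

lemma sos_of_real: "c \<ge> 0 \<Longrightarrow> (of_real c :: 'a::{comm_ring_1,real_algebra_1}) \<in> sos"
  using sos_square[of "of_real (sqrt c) :: 'a"] by (simp flip: of_real_power)

lemma qm_one: "quadratic_module M \<Longrightarrow> 1 \<in> M"
  by (simp add: quadratic_module_def)

lemma qm_add: "quadratic_module M \<Longrightarrow> x \<in> M \<Longrightarrow> y \<in> M \<Longrightarrow> x + y \<in> M"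
  by (simp add: quadratic_module_def)

lemma qm_mult: "quadratic_module M \<Longrightarrow> s \<in> sos \<Longrightarrow> x \<in> M \<Longrightarrow> s * x \<in> M"
  by (simp add: quadratic_module_def)

lemma qm_sos: "quadratic_module M \<Longrightarrow> s \<in> sos \<Longrightarrow> s \<in> M"
  using qm_mult[of M s 1] qm_one[of M] by simp

lemma qm_0: "quadratic_module M \<Longrightarrow> 0 \<in> M"
  using qm_sos sos_0 by blast

lemma qm_sum:
  assumes "quadratic_module M"
  shows "finite S \<Longrightarrow> (\<And>i. i \<in> S \<Longrightarrow> f i \<in> M) \<Longrightarrow> sum f S \<in> M"
  by (induction S rule: finite_induct) (auto intro: qm_0 qm_add assms)

lemma qm_of_real:
  "quadratic_module (M :: 'a::{comm_ring_1,real_algebra_1} set) \<Longrightarrow> c \<ge> 0 \<Longrightarrow> of_real c \<in> M"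
  by (simp add: qm_sos sos_of_real)

lemma qm_scaleR:
  fixes x :: "'a::{comm_ring_1,real_algebra_1}"
  shows "quadratic_module M \<Longrightarrow> c \<ge> 0 \<Longrightarrow> x \<in> M \<Longrightarrow> c *\<^sub>R x \<in> M"
  by (simp add: scaleR_conv_of_real qm_mult sos_of_real)

lemma mult_eq_scaleR_squares:
  fixes y z :: "'a::{comm_ring_1,real_algebra_1}"
  shows "y * z = (1 / 4 :: real) *\<^sub>R ((z + 1)\<^sup>2 * y + (z - 1)\<^sup>2 * (- y))"
proof -
  have "(z + 1)\<^sup>2 * y + (z - 1)\<^sup>2 * (- y) = (4 :: real) *\<^sub>R (y * z)"
    by (simp add: scaleR_conv_of_real algebra_simps power2_eq_square)
  then show ?thesis
    by simp
qed

lemma qm_support_mult: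
  fixes M :: "'a::{comm_ring_1,real_algebra_1} set"
  assumes "quadratic_module M" "y \<in> M" "- y \<in> M"
  shows "y * z \<in> M"
  using assms
  by (subst mult_eq_scaleR_squares) (intro qm_scaleR qm_add qm_mult sos_square; simp)

lemma qm_eq_UNIV_if_minus_one:
  fixes M :: "'a::{comm_ring_1,real_algebra_1} set"
  assumes "quadratic_module M" "- 1 \<in> M"
  shows "M = UNIV"
  using qm_support_mult[OF assms(1) qm_one[OF assms(1)]] assms(2) by auto

section \<open>Polynomials with nonnegative coefficients and real characters\<close>

lemma peval_add: "peval (p + q) x = peval p x + peval q x"
proof -
  have "map_poly of_real (p + q) = (map_poly of_real p + map_poly of_real q :: 'a poly)"
    by (intro poly_eqI) (simp add: coeff_map_poly)
  then show ?thesis by (simp add: peval_def)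
qed

lemma peval_mult: "peval (p * q) x = peval p x * peval q x"
proof -
  have "map_poly of_real (p * q) = (map_poly of_real p * map_poly of_real q :: 'a poly)"
    by (intro poly_eqI) (simp add: coeff_map_poly coeff_mult)
  then show ?thesis by (simp add: peval_def)
qed

lemma peval_const: "peval [:c:] x = of_real c"
  by (simp add: peval_def map_poly_pCons)

lemma peval_monom: "peval (monom c n) x = of_real c * x ^ n"
  by (simp add: peval_def map_poly_monom poly_monom)

lemma peval_eq_sum: "peval p x = (\<Sum>i\<le>degree p. of_real (coeff p i) * x ^ i)"
  by (simp add: peval_def poly_altdef coeff_map_poly degree_map_poly)

lemma nonneg_poly_add: "nonneg_poly p \<Longrightarrow> nonneg_poly q \<Longrightarrow> nonneg_poly (p + q)"
  by (simp add: nonneg_poly_def)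

lemma nonneg_poly_mult: "nonneg_poly p \<Longrightarrow> nonneg_poly q \<Longrightarrow> nonneg_poly (p * q)"
  by (auto simp: nonneg_poly_def coeff_mult intro!: sum_nonneg)

lemma nonneg_poly_const: "c \<ge> 0 \<Longrightarrow> nonneg_poly [:c:]"
  by (simp add: nonneg_poly_def coeff_pCons split: nat.split)

lemma nonneg_poly_monom: "c \<ge> 0 \<Longrightarrow> nonneg_poly (monom c n)"
  by (simp add: nonneg_poly_def)

lemma poly_nonneg: "nonneg_poly p \<Longrightarrow> r \<ge> 0 \<Longrightarrow> poly p r \<ge> 0"
  by (auto simp: nonneg_poly_def poly_altdef intro!: sum_nonneg)

lemma peval_sos: "nonneg_poly p \<Longrightarrow> v \<in> sos \<Longrightarrow> peval p v \<in> sos"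
  by (auto simp: nonneg_poly_def peval_eq_sum intro!: sos_sum sos_mult sos_of_real sos_power)

lemma alg_hom_real_add: "alg_hom_real f \<Longrightarrow> f (x + y) = f x + f y"
  and alg_hom_real_mult: "alg_hom_real f \<Longrightarrow> f (x * y) = f x * f y"
  and alg_hom_real_scaleR: "alg_hom_real f \<Longrightarrow> f (c *\<^sub>R x) = c * f x"
  and alg_hom_real_one: "alg_hom_real f \<Longrightarrow> f 1 = 1"
  by (simp_all add: alg_hom_real_def)

lemma alg_hom_real_of_real: "alg_hom_real f \<Longrightarrow> f (of_real c) = c"
  using alg_hom_real_scaleR[of f c 1] by (simp add: alg_hom_real_one scaleR_conv_of_real)

lemma alg_hom_real_0: "alg_hom_real f \<Longrightarrow> f 0 = 0"
  using alg_hom_real_of_real[of f 0] by simp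

lemma alg_hom_real_uminus: "alg_hom_real f \<Longrightarrow> f (- x) = - f x"
  using alg_hom_real_add[of f x "- x"] by (simp add: alg_hom_real_0)

lemma alg_hom_real_peval:
  assumes "alg_hom_real f"
  shows "f (peval p x) = poly p (f x)"
  by (induction p)
    (simp_all add: peval_def alg_hom_real_0 alg_hom_real_add alg_hom_real_mult alg_hom_real_of_real
      map_poly_pCons assms)

lemma alg_hom_real_sos_nonneg:
  assumes "alg_hom_real f" "s \<in> sos"
  shows "f s \<ge> 0"
proof -
  obtain I :: "nat set" and g where "finite I" "s = (\<Sum>i\<in>I. (g i)\<^sup>2)"
    using assms(2) by (rule sosE)
  then show ?thesis
    by (induction I arbitrary: s rule: finite_induct)
      (simp_all add: alg_hom_real_0 alg_hom_real_add alg_hom_real_mult assms(1) power2_eq_square)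
qed

section \<open>Archimedean orderings\<close>

definition archimedean :: "'a::{comm_ring_1,real_algebra_1} set \<Rightarrow> bool" where
  "archimedean M \<longleftrightarrow> (\<forall>x. \<exists>C. of_real C - x \<in> M)"

locale archimedean_ordering =
  fixes P :: "'a::{comm_ring_1,real_algebra_1} set"
  assumes qm: "quadratic_module P"
    and minus_one_notin: "- 1 \<notin> P"
    and total: "x \<in> P \<or> - x \<in> P"
    and arch: "archimedean P"
begin

lemma of_real_mem_iff: "of_real c \<in> P \<longleftrightarrow> c \<ge> 0"
proof
  assume c: "of_real c \<in> P"
  show "c \<ge> 0"
  proof (rule ccontr)
    assume "\<not> c \<ge> 0"
    then have "(- 1 / c) *\<^sub>R of_real c \<in> P"
      using c by (intro qm_scaleR[OF qm]) auto
    also have "(- 1 / c) *\<^sub>R (of_real c :: 'a) = - 1"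
      using \<open>\<not> c \<ge> 0\<close> by (simp add: scaleR_conv_of_real flip: of_real_mult)
    finally show False
      using minus_one_notin by simp
  qed
qed (rule qm_of_real[OF qm])

lemma ex_pos_bound: "\<exists>C>0. of_real C - x \<in> P"
proof -
  obtain C where C: "of_real C - x \<in> P"
    using arch by (auto simp: archimedean_def)
  have "of_real (max C 1 - C) + (of_real C - x) \<in> P"
    using C by (intro qm_add[OF qm] qm_of_real[OF qm]) auto
  then show ?thesis
    by (intro exI[of _ "max C 1"]) simp
qed

definition at_most_infinitesimal :: "'a \<Rightarrow> bool" where
  "at_most_infinitesimal y \<longleftrightarrow> (\<forall>\<delta>>0. of_real \<delta> - y \<in> P)"

definition infinitesimal :: "'a \<Rightarrow> bool" where
  "infinitesimal y \<longleftrightarrow> at_most_infinitesimal y \<and> at_most_infinitesimal (- y)"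

lemma at_most_infinitesimal_add:
  assumes "at_most_infinitesimal y" "at_most_infinitesimal z"
  shows "at_most_infinitesimal (y + z)"
  unfolding at_most_infinitesimal_def
proof (intro allI impI)
  fix \<delta> :: real
  assume "\<delta> > 0"
  then have "(of_real (\<delta> / 2) - y) + (of_real (\<delta> / 2) - z) \<in> P"
    using assms by (intro qm_add[OF qm]) (auto simp: at_most_infinitesimal_def)
  then show "of_real \<delta> - (y + z) \<in> P"
    by (simp add: algebra_simps flip: of_real_add)
qed

lemma at_most_infinitesimal_sos_mult:
  assumes "at_most_infinitesimal y" "s \<in> sos"
  shows "at_most_infinitesimal (s * y)"
  unfolding at_most_infinitesimal_def
proof (intro allI impI)
  fix \<delta> :: real
  assume "\<delta> > 0"
  obtain C where C: "C > 0" "of_real C - s \<in> P"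
    using ex_pos_bound by blast
  have "(\<delta> / C) *\<^sub>R (of_real C - s) + s * (of_real (\<delta> / C) - y) \<in> P"
    using assms C \<open>\<delta> > 0\<close>
    by (intro qm_add[OF qm] qm_scaleR[OF qm] qm_mult[OF qm]) (auto simp: at_most_infinitesimal_def)
  also have "(\<delta> / C) *\<^sub>R (of_real C - s) + s * (of_real (\<delta> / C) - y) = of_real \<delta> - s * y"
    using C by (simp add: scaleR_conv_of_real algebra_simps flip: of_real_mult)
  finally show "of_real \<delta> - s * y \<in> P" .
qed

lemma infinitesimal_0: "infinitesimal 0"
  by (simp add: infinitesimal_def at_most_infinitesimal_def qm_of_real[OF qm])

lemma infinitesimal_uminus: "infinitesimal y \<Longrightarrow> infinitesimal (- y)"
  by (simp add: infinitesimal_def)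

lemma infinitesimal_add: "infinitesimal y \<Longrightarrow> infinitesimal z \<Longrightarrow> infinitesimal (y + z)"
  using at_most_infinitesimal_add[of "- y" "- z"]
  by (simp add: infinitesimal_def at_most_infinitesimal_add)

lemma infinitesimal_sos_mult: "infinitesimal y \<Longrightarrow> s \<in> sos \<Longrightarrow> infinitesimal (s * y)"
  using at_most_infinitesimal_sos_mult[of "- y" s]
  by (simp add: infinitesimal_def at_most_infinitesimal_sos_mult)

lemma infinitesimal_mult:
  assumes "infinitesimal y"
  shows "infinitesimal (y * z)"
proof -
  have "infinitesimal (of_real (1 / 4) * ((z + 1)\<^sup>2 * y + (z - 1)\<^sup>2 * (- y)))"
    using assms
    by (intro infinitesimal_sos_mult infinitesimal_add infinitesimal_uminus sos_of_real sos_square)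
      simp_all
  then show ?thesis
    by (subst mult_eq_scaleR_squares) (simp add: scaleR_conv_of_real)
qed

lemma infinitesimal_of_real:
  assumes "infinitesimal (of_real c)"
  shows "c = 0"
proof (rule ccontr)
  assume "c \<noteq> 0"
  then have "\<bar>c\<bar> / 2 > 0" by simp
  with assms have "of_real (\<bar>c\<bar> / 2) - of_real c \<in> P" "of_real (\<bar>c\<bar> / 2) + of_real c \<in> P"
    unfolding infinitesimal_def at_most_infinitesimal_def by auto
  then have "\<bar>c\<bar> / 2 - c \<ge> 0" "\<bar>c\<bar> / 2 + c \<ge> 0"
    by (simp_all add: of_real_mem_iff flip: of_real_diff of_real_add)
  then show False
    using \<open>c \<noteq> 0\<close> by linarith
qed

lemma infinitesimal_diff_of_real_unique:
  assumes "infinitesimal (x - of_real c)" "infinitesimal (x - of_real d)"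
  shows "c = d"
proof -
  have "infinitesimal ((x - of_real d) + - (x - of_real c))"
    using assms by (intro infinitesimal_add infinitesimal_uminus)
  then show ?thesis
    using infinitesimal_of_real[of "c - d"] by simp
qed

lemma ex_infinitesimal_diff_of_real: "\<exists>c. infinitesimal (x - of_real c)"
proof -
  define S where "S = {c. x - of_real c \<in> P}"
  obtain C where "of_real C - (- x) \<in> P"
    using arch unfolding archimedean_def by blast
  then have "- C \<in> S"
    by (simp add: S_def add.commute)
  then have "S \<noteq> {}" by blast
  obtain D where D: "of_real D - x \<in> P"
    using arch by (auto simp: archimedean_def)
  have "c \<le> D" if "c \<in> S" for c
  proof -
    have "(x - of_real c) + (of_real D - x) \<in> P"
      using that D by (intro qm_add[OF qm]) (auto simp: S_def)
    then show ?thesis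
      by (simp add: of_real_mem_iff flip: of_real_diff)
  qed
  then have "bdd_above S" by (rule bdd_aboveI)
  have "at_most_infinitesimal (x - of_real (Sup S))"
    unfolding at_most_infinitesimal_def
  proof (intro allI impI)
    fix \<delta> :: real
    assume "\<delta> > 0"
    then have "Sup S + \<delta> \<notin> S"
      using cSup_upper[OF _ \<open>bdd_above S\<close>, of "Sup S + \<delta>"] by auto
    then have "- (x - of_real (Sup S + \<delta>)) \<in> P"
      using total unfolding S_def by blast
    then show "of_real \<delta> - (x - of_real (Sup S)) \<in> P"
      by (simp add: algebra_simps)
  qed
  moreover have "at_most_infinitesimal (- (x - of_real (Sup S)))"
    unfolding at_most_infinitesimal_def
  proof (intro allI impI)
    fix \<delta> :: real
    assume "\<delta> > 0"
    then obtain c where c: "c \<in> S" "Sup S - \<delta> < c"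
      using less_cSup_iff[OF \<open>S \<noteq> {}\<close> \<open>bdd_above S\<close>, of "Sup S - \<delta>"] by auto
    then have "(x - of_real c) + of_real (c - Sup S + \<delta>) \<in> P"
      by (intro qm_add[OF qm] qm_of_real[OF qm]) (auto simp: S_def)
    then show "of_real \<delta> - - (x - of_real (Sup S)) \<in> P"
      by (simp add: algebra_simps)
  qed
  ultimately show ?thesis
    unfolding infinitesimal_def by blast
qed

definition standard_part :: "'a \<Rightarrow> real" where
  "standard_part x = (THE c. infinitesimal (x - of_real c))"

lemma infinitesimal_diff_standard_part: "infinitesimal (x - of_real (standard_part x))"
proof -
  have "\<exists>!c. infinitesimal (x - of_real c)"
    using ex_infinitesimal_diff_of_real infinitesimal_diff_of_real_unique by blast
  then show ?thesis
    unfolding standard_part_def by (rule theI')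
qed

lemma standard_part_eqI: "infinitesimal (x - of_real c) \<Longrightarrow> standard_part x = c"
  using infinitesimal_diff_standard_part by (rule infinitesimal_diff_of_real_unique)

lemma alg_hom_real_standard_part: "alg_hom_real standard_part"
  unfolding alg_hom_real_def
proof (intro conjI allI)
  fix x y
  have "infinitesimal ((x - of_real (standard_part x)) + (y - of_real (standard_part y)))"
    by (intro infinitesimal_add infinitesimal_diff_standard_part)
  then show "standard_part (x + y) = standard_part x + standard_part y"
    by (intro standard_part_eqI) (simp add: algebra_simps)
next
  fix c x
  have "infinitesimal ((x - of_real (standard_part x)) * of_real c)"
    by (intro infinitesimal_mult infinitesimal_diff_standard_part)
  then show "standard_part (c *\<^sub>R x) = c * standard_part x"
    by (intro standard_part_eqI) (simp add: scaleR_conv_of_real algebra_simps)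
next
  fix x y
  have "infinitesimal
      ((x - of_real (standard_part x)) * y + (y - of_real (standard_part y)) * of_real (standard_part x))"
    by (intro infinitesimal_add infinitesimal_mult infinitesimal_diff_standard_part)
  then show "standard_part (x * y) = standard_part x * standard_part y"
    by (intro standard_part_eqI) (simp add: algebra_simps)
next
  show "standard_part 1 = 1"
    using infinitesimal_0 by (intro standard_part_eqI) simp
qed

lemma standard_part_nonneg:
  assumes "x \<in> P"
  shows "standard_part x \<ge> 0"
proof (rule field_le_epsilon)
  fix \<delta> :: real
  assume "\<delta> > 0"
  then have "(of_real \<delta> - (x - of_real (standard_part x))) + x \<in> P"
    using assms infinitesimal_diff_standard_part[of x]
    by (intro qm_add[OF qm]) (auto simp: infinitesimal_def at_most_infinitesimal_def)
  then show "0 \<le> standard_part x + \<delta>"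
    by (simp add: of_real_mem_iff algebra_simps flip: of_real_add)
qed

end

section \<open>Separating points from Archimedean quadratic modules\<close>

lemma qm_Union_chain:
  fixes C :: "'a::comm_ring_1 set set"
  assumes "C \<noteq> {}" "chain\<^sub>\<subseteq> C" "\<And>X. X \<in> C \<Longrightarrow> quadratic_module X"
  shows "quadratic_module (\<Union>C)"
  unfolding quadratic_module_def
proof (intro conjI ballI)
  show "1 \<in> \<Union>C"
    using assms(1,3) qm_one by blast
next
  fix x y
  assume "x \<in> \<Union>C" "y \<in> \<Union>C"
  then obtain X Y where XY: "X \<in> C" "Y \<in> C" "x \<in> X" "y \<in> Y" by blast
  with assms(2) have "X \<subseteq> Y \<or> Y \<subseteq> X"
    by (simp add: chain_subset_def)
  with XY obtain Z where "Z \<in> C" "x \<in> Z" "y \<in> Z" by blast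
  then show "x + y \<in> \<Union>C"
    using assms(3) qm_add by blast
next
  fix s x :: 'a
  assume "s \<in> sos" "x \<in> \<Union>C"
  then show "s * x \<in> \<Union>C"
    using assms(3) qm_mult by blast
qed

lemma qm_adjoin:
  fixes P :: "'a::comm_ring_1 set"
  assumes "quadratic_module P"
  shows "quadratic_module {p + s * z | p s. p \<in> P \<and> s \<in> sos}"
  unfolding quadratic_module_def
proof (intro conjI ballI)
  show "1 \<in> {p + s * z | p s. p \<in> P \<and> s \<in> sos}"
  proof -
    have "1 = 1 + 0 * z" by simp
    then show ?thesis
      using qm_one[OF assms] sos_0 by blast
  qed
next
  fix x y
  assume "x \<in> {p + s * z | p s. p \<in> P \<and> s \<in> sos}" "y \<in> {p + s * z | p s. p \<in> P \<and> s \<in> sos}"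
  then obtain p1 s1 p2 s2 where "p1 \<in> P" "s1 \<in> sos" "x = p1 + s1 * z" "p2 \<in> P" "s2 \<in> sos" "y = p2 + s2 * z"
    by blast
  then have "x + y = (p1 + p2) + (s1 + s2) * z" "p1 + p2 \<in> P" "s1 + s2 \<in> sos"
    by (simp_all add: algebra_simps qm_add[OF assms] sos_add del: add.commute)
  then show "x + y \<in> {p + s * z | p s. p \<in> P \<and> s \<in> sos}"
    by blast
next
  fix t x :: 'a
  assume "t \<in> sos" "x \<in> {p + s * z | p s. p \<in> P \<and> s \<in> sos}"
  then obtain p s where "p \<in> P" "s \<in> sos" "x = p + s * z"
    by blast
  then have "t * x = t * p + (t * s) * z" "t * p \<in> P" "t * s \<in> sos"
    using \<open>t \<in> sos\<close> by (simp_all add: algebra_simps qm_mult[OF assms] sos_mult del: mult.commute)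
  then show "t * x \<in> {p + s * z | p s. p \<in> P \<and> s \<in> sos}"
    by blast
qed

lemma maximal_qm_total:
  fixes P :: "'a::{comm_ring_1,real_algebra_1} set"
  assumes qm: "quadratic_module P" and proper: "- 1 \<notin> P"
    and maximal: "\<And>X. quadratic_module X \<Longrightarrow> P \<subseteq> X \<Longrightarrow> - 1 \<notin> X \<Longrightarrow> X = P"
  shows "x \<in> P \<or> - x \<in> P"
proof (rule ccontr)
  have adjoin: "\<exists>p\<in>P. \<exists>s\<in>sos. - 1 = p + s * z" if "z \<notin> P" for z
  proof -
    let ?X = "{p + s * z | p s. p \<in> P \<and> s \<in> sos}"
    have "p \<in> ?X" if "p \<in> P" for p
    proof -
      have "p = p + 0 * z" by simp
      then show ?thesis
        using that sos_0 by blast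
    qed
    then have "P \<subseteq> ?X" by blast
    have "z = 0 + 1 * z" by simp
    then have "z \<in> ?X"
      using qm_0[OF qm] sos_1 by blast
    have "- 1 \<in> ?X"
    proof (rule ccontr)
      assume "- 1 \<notin> ?X"
      then have "?X = P"
        using maximal[OF qm_adjoin[OF qm] \<open>P \<subseteq> ?X\<close>] by blast
      then show False
        using \<open>z \<in> ?X\<close> \<open>z \<notin> P\<close> by blast
    qed
    then show ?thesis by blast
  qed
  assume "\<not> (x \<in> P \<or> - x \<in> P)"
  then obtain p1 s1 p2 s2 where
    h: "p1 \<in> P" "s1 \<in> sos" "- 1 = p1 + s1 * x" "p2 \<in> P" "s2 \<in> sos" "- 1 = p2 + s2 * (- x)"
    using adjoin[of x] adjoin[of "- x"] by blast
  have "p1 = - 1 - s1 * x" "p2 = - 1 + s2 * x"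
    using h(3,6) by (simp_all add: algebra_simps)
  then have "- s1 = s2 + (s2 * p1 + s1 * p2)"
    by (simp only:) (simp add: algebra_simps)
  moreover have "s2 \<in> P" "s2 * p1 \<in> P" "s1 * p2 \<in> P"
    using h(1,2,4,5) qm_sos[OF qm] qm_mult[OF qm] by blast+
  then have "s2 + (s2 * p1 + s1 * p2) \<in> P"
    by (intro qm_add[OF qm])
  ultimately have "s1 * x \<in> P"
    by (intro qm_support_mult[OF qm] qm_sos[OF qm h(2)]) simp
  then have "p1 + s1 * x \<in> P"
    using h(1) by (intro qm_add[OF qm])
  then show False
    using h(3) proper by simp
qed

lemma ex_total_qm_extension:
  fixes Q :: "'a::{comm_ring_1,real_algebra_1} set"
  assumes "quadratic_module Q" "- 1 \<notin> Q"
  obtains P where "quadratic_module P" "Q \<subseteq> P" "- 1 \<notin> P" "\<And>x. x \<in> P \<or> - x \<in> P"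
proof -
  define F where "F = {P. quadratic_module P \<and> Q \<subseteq> P \<and> - 1 \<notin> P}"
  have "\<exists>P\<in>F. \<forall>X\<in>F. P \<subseteq> X \<longrightarrow> X = P"
  proof (rule subset_Zorn_nonempty)
    show "F \<noteq> {}"
      using assms unfolding F_def by blast
  next
    fix C
    assume "C \<noteq> {}" "subset.chain F C"
    then have "C \<subseteq> F" "chain\<^sub>\<subseteq> C"
      by (simp_all add: subset_chain_def chain_subset_def)
    have "quadratic_module (\<Union>C)"
      using \<open>C \<noteq> {}\<close> \<open>chain\<^sub>\<subseteq> C\<close>
    proof (rule qm_Union_chain)
      show "quadratic_module X" if "X \<in> C" for X
        using that \<open>C \<subseteq> F\<close> unfolding F_def by blast
    qed
    moreover have "Q \<subseteq> \<Union>C" "- 1 \<notin> \<Union>C"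
      using \<open>C \<noteq> {}\<close> \<open>C \<subseteq> F\<close> unfolding F_def by blast+
    ultimately show "\<Union>C \<in> F"
      unfolding F_def by blast
  qed
  then obtain P where "P \<in> F" and maximal_in_F: "\<And>X. X \<in> F \<Longrightarrow> P \<subseteq> X \<Longrightarrow> X = P"
    by blast
  then have P: "quadratic_module P" "Q \<subseteq> P" "- 1 \<notin> P"
    by (simp_all add: F_def)
  have maximal: "X = P" if "quadratic_module X" "P \<subseteq> X" "- 1 \<notin> X" for X
    using that P(2) by (intro maximal_in_F) (auto simp: F_def)
  show ?thesis
    using P maximal_qm_total[OF P(1,3) maximal] by (rule that)
qed

lemma archimedean_mono: "archimedean N \<Longrightarrow> N \<subseteq> P \<Longrightarrow> archimedean P"
  unfolding archimedean_def by blast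

lemma qm_adjoin_negative_multiple:
  fixes N :: "'a::comm_ring_1 set"
  assumes qm: "quadratic_module N"
  shows "quadratic_module {y. \<exists>s\<in>sos. \<exists>t\<in>sos. \<exists>n\<in>N. (1 + s) * y = n - t * b}"
  unfolding quadratic_module_def
proof (intro conjI ballI)
  have "(1 + 0) * 1 = 1 - 0 * b" by simp
  then show "1 \<in> {y. \<exists>s\<in>sos. \<exists>t\<in>sos. \<exists>n\<in>N. (1 + s) * y = n - t * b}"
    using sos_0 qm_one[OF qm] by blast
next
  fix x y
  assume "x \<in> {y. \<exists>s\<in>sos. \<exists>t\<in>sos. \<exists>n\<in>N. (1 + s) * y = n - t * b}"
    and "y \<in> {y. \<exists>s\<in>sos. \<exists>t\<in>sos. \<exists>n\<in>N. (1 + s) * y = n - t * b}"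
  then obtain s1 t1 n1 s2 t2 n2 where
    h: "s1 \<in> sos" "t1 \<in> sos" "n1 \<in> N" "(1 + s1) * x = n1 - t1 * b"
      "s2 \<in> sos" "t2 \<in> sos" "n2 \<in> N" "(1 + s2) * y = n2 - t2 * b"
    by blast
  have "(1 + (s1 + s2 + s1 * s2)) * (x + y) = (1 + s2) * ((1 + s1) * x) + (1 + s1) * ((1 + s2) * y)"
    by (simp add: algebra_simps)
  also have "\<dots> = ((1 + s2) * n1 + (1 + s1) * n2) - ((1 + s2) * t1 + (1 + s1) * t2) * b"
    unfolding h(4,8) by (simp add: algebra_simps)
  finally show "x + y \<in> {y. \<exists>s\<in>sos. \<exists>t\<in>sos. \<exists>n\<in>N. (1 + s) * y = n - t * b}"
    using h by (blast intro: sos_add sos_mult sos_1 qm_add[OF qm] qm_mult[OF qm])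
next
  fix r x :: 'a
  assume "r \<in> sos" "x \<in> {y. \<exists>s\<in>sos. \<exists>t\<in>sos. \<exists>n\<in>N. (1 + s) * y = n - t * b}"
  then obtain s t n where h: "s \<in> sos" "t \<in> sos" "n \<in> N" "(1 + s) * x = n - t * b"
    by blast
  have "(1 + s) * (r * x) = r * ((1 + s) * x)"
    by (simp add: algebra_simps)
  also have "\<dots> = r * n - (r * t) * b"
    unfolding h(4) by (simp add: algebra_simps)
  finally show "r * x \<in> {y. \<exists>s\<in>sos. \<exists>t\<in>sos. \<exists>n\<in>N. (1 + s) * y = n - t * b}"
    using h \<open>r \<in> sos\<close> by (blast intro: sos_mult qm_mult[OF qm])
qed

lemma ex_hom_nonpos_if_not_mem:
  fixes N :: "'a::{comm_ring_1,real_algebra_1} set"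
  assumes qm: "quadratic_module N" and arch: "archimedean N"
    and saturated: "\<And>s x. s \<in> sos \<Longrightarrow> (1 + s) * x \<in> N \<Longrightarrow> x \<in> N"
    and "b \<notin> N"
  obtains f where "alg_hom_real f" "\<forall>m\<in>N. f m \<ge> 0" "f b \<le> 0"
proof -
  \<comment> \<open>the saturated quadratic module generated by N and -b\<close>
  define Q where "Q = {y. \<exists>s\<in>sos. \<exists>t\<in>sos. \<exists>n\<in>N. (1 + s) * y = n - t * b}"
  have "N \<subseteq> Q"
    using sos_0 by (force simp: Q_def)
  have "- b \<in> Q"
    using sos_0 sos_1 qm_0[OF qm] by (force simp: Q_def)
  have "b \<notin> Q"
  proof
    assume "b \<in> Q"
    then obtain s t n where "s \<in> sos" "t \<in> sos" "n \<in> N" "(1 + s) * b = n - t * b"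
      by (auto simp: Q_def)
    then have "(1 + (s + t)) * b \<in> N" "s + t \<in> sos"
      by (simp_all add: algebra_simps sos_add)
    then show False
      using saturated \<open>b \<notin> N\<close> by blast
  qed
  moreover have "quadratic_module Q"
    unfolding Q_def using qm by (rule qm_adjoin_negative_multiple)
  ultimately have "- 1 \<notin> Q"
    using qm_eq_UNIV_if_minus_one by auto
  then obtain P where P: "quadratic_module P" "Q \<subseteq> P" "- 1 \<notin> P" "\<And>x. x \<in> P \<or> - x \<in> P"
    using ex_total_qm_extension \<open>quadratic_module Q\<close> by blast
  interpret archimedean_ordering P
    using P arch archimedean_mono \<open>N \<subseteq> Q\<close> by unfold_locales blast+
  show ?thesis
  proof (rule that[of standard_part])
    show "\<forall>m\<in>N. standard_part m \<ge> 0"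
      using \<open>N \<subseteq> Q\<close> P(2) standard_part_nonneg by blast
    show "standard_part b \<le> 0"
      using standard_part_nonneg[of "- b"] \<open>- b \<in> Q\<close> P(2)
      by (auto simp: alg_hom_real_uminus[OF alg_hom_real_standard_part])
  qed (rule alg_hom_real_standard_part)
qed

lemma mem_archimedean_qm_if_hom_nonneg:
  fixes N :: "'a::{comm_ring_1,real_algebra_1} set"
  assumes qm: "quadratic_module N" and arch: "archimedean N"
    and saturated: "\<And>s x. s \<in> sos \<Longrightarrow> (1 + s) * x \<in> N \<Longrightarrow> x \<in> N"
    and closed: "\<And>x. (\<And>\<delta>. \<delta> > 0 \<Longrightarrow> x + of_real \<delta> \<in> N) \<Longrightarrow> x \<in> N"
    and nonneg: "\<And>f. alg_hom_real f \<Longrightarrow> \<forall>m\<in>N. f m \<ge> 0 \<Longrightarrow> f a \<ge> 0"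
  shows "a \<in> N"
proof (rule ccontr)
  assume "a \<notin> N"
  then obtain \<delta> where \<delta>: "\<delta> > 0" "a + of_real \<delta> \<notin> N"
    using closed by blast
  obtain f where f: "alg_hom_real f" "\<forall>m\<in>N. f m \<ge> 0" "f (a + of_real \<delta>) \<le> 0"
    using qm arch saturated \<delta>(2) by (rule ex_hom_nonpos_if_not_mem)
  then have "f a + \<delta> \<le> 0"
    by (simp add: alg_hom_real_add alg_hom_real_of_real)
  then show False
    using nonneg[OF f(1,2)] \<delta>(1) by linarith
qed

section \<open>The closure of a quadratic module at a point\<close>

lemma one_minus_plus_power_sos:
  assumes "u \<in> sos"
  shows "1 - u + u ^ (n + 2) \<in> sos"
proof -
  have "(1 - u) * (\<Sum>j<n + 1. u ^ j) = 1 - u ^ (n + 1)"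
    by (rule one_diff_power_eq[symmetric])
  then have "(1 - u)\<^sup>2 * (\<Sum>j<n + 1. u ^ j) = (1 - u) * (1 - u ^ (n + 1))"
    by (simp add: power2_eq_square mult.assoc)
  then have "1 - u + u ^ (n + 2) = (1 - u)\<^sup>2 * (\<Sum>j<n + 1. u ^ j) + u ^ (n + 1)"
    by (simp add: algebra_simps)
  also have "\<dots> \<in> sos"
    using assms by (intro sos_add sos_mult sos_square sos_sum sos_power finite_lessThan)
  finally show ?thesis .
qed

lemma qm_power_le:
  fixes N :: "'a::{comm_ring_1,real_algebra_1} set"
  assumes qm: "quadratic_module N" and "y \<in> sos" "C \<ge> 0" "of_real C - y \<in> N"
  shows "of_real (C ^ k) - y ^ k \<in> N"
proof -
  have "of_real (C ^ k) - y ^ k = (\<Sum>i<k. y ^ (k - Suc i) * of_real C ^ i) * (of_real C - y)"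
    by (simp add: power_diff_sumr2 mult.commute)
  also have "\<dots> \<in> N"
    using assms by (intro qm_mult[OF qm] sos_sum sos_mult sos_power sos_of_real finite_lessThan)
  finally show ?thesis .
qed

lemma qm_peval_le_poly:
  fixes N :: "'a::{comm_ring_1,real_algebra_1} set"
  assumes qm: "quadratic_module N" and "y \<in> sos" "C \<ge> 0" "of_real C - y \<in> N"
    and "nonneg_poly p"
  shows "of_real (poly p C) - peval p y \<in> N"
proof -
  have "of_real (poly p C) - peval p y = (\<Sum>i\<le>degree p. coeff p i *\<^sub>R (of_real (C ^ i) - y ^ i))"
    by (simp add: poly_altdef peval_eq_sum scaleR_conv_of_real algebra_simps
        sum_subtractf flip: sum_distrib_left)
  also have "\<dots> \<in> N"
    using assms
    by (intro qm_sum[OF qm] qm_scaleR[OF qm] qm_power_le) (auto simp: nonneg_poly_def)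
  finally show ?thesis .
qed

lemma archimedean_if_squares_bounded:
  fixes N :: "'a::{comm_ring_1,real_algebra_1} set"
  assumes qm: "quadratic_module N" and bounded: "\<And>x. \<exists>C. of_real C - x\<^sup>2 \<in> N"
  shows "archimedean N"
  unfolding archimedean_def
proof
  fix x
  obtain C where "of_real C - x\<^sup>2 \<in> N"
    using bounded by blast
  then have "(of_real C - x\<^sup>2) + (x - of_real (1 / 2))\<^sup>2 \<in> N"
    by (intro qm_add[OF qm] qm_sos[OF qm, of "(x - _)\<^sup>2"] sos_square)
  also have "(of_real C - x\<^sup>2) + (x - of_real (1 / 2))\<^sup>2 = of_real (C + 1 / 4) - x"
  proof -
    have "(2 :: 'a) * of_real (1 / 2) = 1"
      using of_real_mult[of 2 "1 / 2", where 'a = 'a] by simp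
    then show ?thesis
      by (simp add: power2_eq_square algebra_simps flip: of_real_mult of_real_add of_real_diff)
  qed
  finally show "\<exists>C. of_real C - x \<in> N" ..
qed

definition qm_closure :: "'a::{comm_ring_1,real_algebra_1} set \<Rightarrow> 'a \<Rightarrow> real \<Rightarrow> 'a set" where
  "qm_closure M v r = {x. \<forall>\<epsilon>>0. \<exists>q w. nonneg_poly q \<and> w \<in> sos \<and> poly q r \<le> \<epsilon>
     \<and> (1 + w) * (x + peval q v) \<in> M}"

lemma qm_closureI:
  "(\<And>\<epsilon>. \<epsilon> > 0 \<Longrightarrow> \<exists>q w. nonneg_poly q \<and> w \<in> sos \<and> poly q r \<le> \<epsilon>
      \<and> (1 + w) * (x + peval q v) \<in> M)
    \<Longrightarrow> x \<in> qm_closure M v r"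
  by (simp add: qm_closure_def)

lemma qm_closureE:
  assumes "x \<in> qm_closure M v r" "\<epsilon> > 0"
  obtains q w where "nonneg_poly q" "w \<in> sos" "poly q r \<le> \<epsilon>" "(1 + w) * (x + peval q v) \<in> M"
  using assms by (auto simp: qm_closure_def)

lemma subset_qm_closure: "M \<subseteq> qm_closure M v r"
proof
  fix x
  assume "x \<in> M"
  then show "x \<in> qm_closure M v r"
    by (intro qm_closureI exI[of _ 0]) (simp_all add: nonneg_poly_def sos_0 peval_def)
qed

lemma qm_closure_closed:
  assumes "\<And>\<delta>. \<delta> > 0 \<Longrightarrow> x + of_real \<delta> \<in> qm_closure M v r"
  shows "x \<in> qm_closure M v r"
proof (rule qm_closureI)
  fix \<epsilon> :: real
  assume "\<epsilon> > 0"
  then obtain q w where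
    h: "nonneg_poly q" "w \<in> sos" "poly q r \<le> \<epsilon> / 2" "(1 + w) * (x + of_real (\<epsilon> / 2) + peval q v) \<in> M"
    using assms[of "\<epsilon> / 2"] by (auto elim: qm_closureE[of _ _ _ _ "\<epsilon> / 2"])
  have "nonneg_poly (q + [:\<epsilon> / 2:])"
    using h(1) \<open>\<epsilon> > 0\<close> by (auto intro!: nonneg_poly_add nonneg_poly_const)
  moreover have "peval (q + [:\<epsilon> / 2:]) v = of_real (\<epsilon> / 2) + peval q v"
    by (simp add: peval_add peval_const)
  ultimately show "\<exists>q w. nonneg_poly q \<and> w \<in> sos \<and> poly q r \<le> \<epsilon> \<and> (1 + w) * (x + peval q v) \<in> M"
    using h by (intro exI[of _ "q + [:\<epsilon> / 2:]"] exI[of _ w]) (simp add: add.assoc)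
qed

lemma alg_hom_real_nonneg_if_mem_qm_closure:
  assumes f: "alg_hom_real f" "\<forall>m\<in>M. f m \<ge> 0" and a: "a \<in> qm_closure M v (f v)"
  shows "f a \<ge> 0"
proof (rule field_le_epsilon)
  fix \<epsilon> :: real
  assume "\<epsilon> > 0"
  obtain q w where q: "nonneg_poly q" "w \<in> sos" "poly q (f v) \<le> \<epsilon>" "(1 + w) * (a + peval q v) \<in> M"
    using a \<open>\<epsilon> > 0\<close> by (rule qm_closureE)
  have "0 \<le> f ((1 + w) * (a + peval q v))"
    using f(2) q(4) by blast
  also have "\<dots> = (1 + f w) * (f a + poly q (f v))"
    by (simp add: f(1) alg_hom_real_add alg_hom_real_mult alg_hom_real_one alg_hom_real_peval)
  finally have "f a + poly q (f v) \<ge> 0"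
    using alg_hom_real_sos_nonneg[OF f(1) q(2)] by (simp add: zero_le_mult_iff)
  then show "0 \<le> f a + \<epsilon>"
    using q(3) by linarith
qed

locale sos_dominated_qm =
  fixes M :: "'a::{comm_ring_1,real_algebra_1} set" and v :: 'a
  assumes qm: "quadratic_module M"
    and v_sos: "v \<in> sos"
    and dominated: "\<forall>b\<in>sos. \<exists>p. nonneg_poly p \<and> peval p v - b \<in> M"
begin

lemma qm_closure_add:
  assumes "x \<in> qm_closure M v r" "y \<in> qm_closure M v r"
  shows "x + y \<in> qm_closure M v r"
proof (rule qm_closureI)
  fix \<epsilon> :: real
  assume "\<epsilon> > 0"
  then obtain q1 w1 q2 w2 where
    h1: "nonneg_poly q1" "w1 \<in> sos" "poly q1 r \<le> \<epsilon> / 2" "(1 + w1) * (x + peval q1 v) \<in> M" and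
    h2: "nonneg_poly q2" "w2 \<in> sos" "poly q2 r \<le> \<epsilon> / 2" "(1 + w2) * (y + peval q2 v) \<in> M"
    using assms by (meson half_gt_zero qm_closureE)
  have "(1 + (w1 + w2 + w1 * w2)) * (x + y + peval (q1 + q2) v)
      = (1 + w2) * ((1 + w1) * (x + peval q1 v)) + (1 + w1) * ((1 + w2) * (y + peval q2 v))"
    by (simp add: peval_add algebra_simps)
  also have "\<dots> \<in> M"
    using h1 h2 by (simp add: qm_add[OF qm] qm_mult[OF qm] sos_add sos_1)
  finally show "\<exists>q w. nonneg_poly q \<and> w \<in> sos \<and> poly q r \<le> \<epsilon> \<and> (1 + w) * (x + y + peval q v) \<in> M"
    using h1 h2
    by (intro exI[of _ "q1 + q2"] exI[of _ "w1 + w2 + w1 * w2"]) (simp add: nonneg_poly_add sos_add sos_mult)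
qed

lemma qm_closure_saturated:
  assumes "s \<in> sos" "(1 + s) * x \<in> qm_closure M v r"
  shows "x \<in> qm_closure M v r"
proof (rule qm_closureI)
  fix \<epsilon> :: real
  assume "\<epsilon> > 0"
  obtain q w where h: "nonneg_poly q" "w \<in> sos" "poly q r \<le> \<epsilon>" "(1 + w) * ((1 + s) * x + peval q v) \<in> M"
    using assms(2) \<open>\<epsilon> > 0\<close> by (rule qm_closureE)
  have "(1 + (w + s + w * s)) * (x + peval q v) = (1 + w) * ((1 + s) * x + peval q v) + (1 + w) * s * peval q v"
    by (simp add: algebra_simps)
  also have "\<dots> \<in> M"
    using h assms(1) v_sos by (simp add: qm_add[OF qm] qm_sos[OF qm] sos_mult sos_add sos_1 peval_sos)
  finally show "\<exists>q w. nonneg_poly q \<and> w \<in> sos \<and> poly q r \<le> \<epsilon> \<and> (1 + w) * (x + peval q v) \<in> M"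
    using h assms(1) by (intro exI[of _ q] exI[of _ "w + s + w * s"]) (simp add: sos_add sos_mult)
qed

context
  fixes r :: real
  assumes r: "r \<ge> 0"
begin

lemma qm_closure_sos_mult:
  assumes "s \<in> sos" "x \<in> qm_closure M v r"
  shows "s * x \<in> qm_closure M v r"
proof (rule qm_closureI)
  fix \<epsilon> :: real
  assume "\<epsilon> > 0"
  obtain p where p: "nonneg_poly p" "peval p v - s \<in> M"
    using dominated assms(1) by blast
  define K where "K = poly p r"
  have "K \<ge> 0"
    unfolding K_def using p(1) r by (rule poly_nonneg)
  then have "\<epsilon> / (K + 1) > 0"
    using \<open>\<epsilon> > 0\<close> by simp
  with assms(2) obtain q w where
    h: "nonneg_poly q" "w \<in> sos" "poly q r \<le> \<epsilon> / (K + 1)" "(1 + w) * (x + peval q v) \<in> M"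
    by (rule qm_closureE)
  have "poly (p * q) r = K * poly q r"
    by (simp add: K_def)
  also have "\<dots> \<le> K * (\<epsilon> / (K + 1))"
    using h(3) \<open>K \<ge> 0\<close> by (rule mult_left_mono)
  also have "\<dots> \<le> \<epsilon>"
    using \<open>K \<ge> 0\<close> \<open>\<epsilon> > 0\<close> by (simp add: field_simps)
  finally have "poly (p * q) r \<le> \<epsilon>" .
  have "(1 + w) * (s * x + peval (p * q) v)
      = s * ((1 + w) * (x + peval q v)) + ((1 + w) * peval q v) * (peval p v - s)"
    by (simp add: peval_mult algebra_simps)
  also have "\<dots> \<in> M"
    using h p assms(1) v_sos by (simp add: qm_add[OF qm] qm_mult[OF qm] sos_mult sos_add sos_1 peval_sos)
  finally show "\<exists>q w. nonneg_poly q \<and> w \<in> sos \<and> poly q r \<le> \<epsilon> \<and> (1 + w) * (s * x + peval q v) \<in> M"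
    using h p \<open>poly (p * q) r \<le> \<epsilon>\<close> by (intro exI[of _ "p * q"] exI[of _ w]) (simp add: nonneg_poly_mult)
qed

lemma quadratic_module_qm_closure: "quadratic_module (qm_closure M v r)"
  unfolding quadratic_module_def
  using subset_qm_closure qm_one[OF qm] qm_closure_add qm_closure_sos_mult by blast

lemma bound_minus_mem_qm_closure: "of_real (r + 1) - v \<in> qm_closure M v r"
proof (rule qm_closureI)
  fix \<epsilon> :: real
  assume "\<epsilon> > 0"
  \<comment> \<open>With u = v / (r + 1), the witness q = c X^(n+2) turns r + 1 - v + q v into
    (r + 1) (1 - u + u^(n+2)), a sum of squares, while q r = (r + 1) (r / (r + 1))^(n+2) is small.\<close>
  define \<rho> where "\<rho> = r + 1"
  have \<rho>: "\<rho> > 0" "r / \<rho> \<ge> 0" "r / \<rho> < 1"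
    using r by (simp_all add: \<rho>_def)
  obtain n where n: "(r / \<rho>) ^ n < \<epsilon> / \<rho>"
    using real_arch_pow_inv[of "\<epsilon> / \<rho>" "r / \<rho>"] \<open>\<epsilon> > 0\<close> \<rho> by auto
  define c where "c = \<rho> / \<rho> ^ (n + 2)"
  define u where "u = of_real (1 / \<rho>) * v"
  have "poly (monom c (n + 2)) r = \<rho> * (r / \<rho>) ^ (n + 2)"
    by (simp add: poly_monom c_def power_divide)
  also have "\<dots> \<le> \<rho> * (r / \<rho>) ^ n"
    using \<rho> by (intro mult_left_mono power_decreasing) auto
  also have "\<dots> \<le> \<epsilon>"
    using n \<rho> by (simp add: field_simps)
  finally have small: "poly (monom c (n + 2)) r \<le> \<epsilon>" .
  have v: "v = of_real \<rho> * u"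
    using \<rho> by (simp add: u_def flip: mult.assoc of_real_mult)
  have "of_real c * v ^ (n + 2) = of_real (c * \<rho> ^ (n + 2)) * u ^ (n + 2)"
    by (simp add: v power_mult_distrib)
  also have "c * \<rho> ^ (n + 2) = \<rho>"
    using \<rho> by (simp add: c_def)
  finally have "of_real \<rho> - v + peval (monom c (n + 2)) v = of_real \<rho> * (1 - u + u ^ (n + 2))"
    by (simp add: peval_monom v algebra_simps)
  also have "u \<in> sos"
    using \<rho> v_sos by (simp add: u_def sos_mult sos_of_real)
  then have "of_real \<rho> * (1 - u + u ^ (n + 2)) \<in> sos"
    using \<rho> by (intro sos_mult sos_of_real one_minus_plus_power_sos) simp_all
  finally have "(1 + 0) * (of_real (r + 1) - v + peval (monom c (n + 2)) v) \<in> M"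
    by (simp add: \<rho>_def qm_sos[OF qm])
  moreover have "nonneg_poly (monom c (n + 2))"
    using \<rho> by (simp add: c_def nonneg_poly_monom)
  ultimately show "\<exists>q w. nonneg_poly q \<and> w \<in> sos \<and> poly q r \<le> \<epsilon>
      \<and> (1 + w) * (of_real (r + 1) - v + peval q v) \<in> M"
    using small sos_0 by blast
qed

lemma archimedean_qm_closure: "archimedean (qm_closure M v r)"
proof (rule archimedean_if_squares_bounded[OF quadratic_module_qm_closure])
  fix x
  obtain p where p: "nonneg_poly p" "peval p v - x\<^sup>2 \<in> M"
    using dominated sos_square by blast
  have "(of_real (poly p (r + 1)) - peval p v) + (peval p v - x\<^sup>2) \<in> qm_closure M v r"
    using p r v_sos subset_qm_closure
    by (intro qm_add[OF quadratic_module_qm_closure] qm_peval_le_poly[OF quadratic_module_qm_closure]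
        bound_minus_mem_qm_closure) auto
  then show "\<exists>C. of_real C - x\<^sup>2 \<in> qm_closure M v r"
    by auto
qed

lemma mem_qm_closure_if_hom_nonneg:
  assumes "\<And>f. alg_hom_real f \<Longrightarrow> \<forall>m\<in>M. f m \<ge> 0 \<Longrightarrow> f a \<ge> 0"
  shows "a \<in> qm_closure M v r"
proof (rule mem_archimedean_qm_if_hom_nonneg)
  show "quadratic_module (qm_closure M v r)"
    by (rule quadratic_module_qm_closure)
  show "archimedean (qm_closure M v r)"
    by (rule archimedean_qm_closure)
  show "x \<in> qm_closure M v r" if "s \<in> sos" "(1 + s) * x \<in> qm_closure M v r" for s x
    using that by (rule qm_closure_saturated)
  show "x \<in> qm_closure M v r" if "\<And>\<delta>. \<delta> > 0 \<Longrightarrow> x + of_real \<delta> \<in> qm_closure M v r" for x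
    using that by (rule qm_closure_closed)
  show "f a \<ge> 0" if "alg_hom_real f" "\<forall>m\<in>qm_closure M v r. f m \<ge> 0" for f
    using assms that subset_qm_closure by blast
qed

end

end

theorem theorem4p5:
  fixes M :: "'a::{comm_ring_1,real_algebra_1} set" and v a :: 'a
  assumes "quadratic_module M"
    and "v \<in> sos"
    and "\<forall>b\<in>sos. \<exists>p. nonneg_poly p \<and> peval p v - b \<in> M"
  shows "(\<forall>f. alg_hom_real f \<and> (\<forall>m\<in>M. f m \<ge> 0) \<longrightarrow> f a \<ge> 0) \<longleftrightarrow>
         (\<forall>r::real. r \<ge> 0 \<longrightarrow> (\<forall>\<epsilon>>0. \<exists>q w. nonneg_poly q \<and> w \<in> sos \<and>
              poly q r \<le> \<epsilon> \<and> (1 + w) * (a + peval q v) \<in> M))"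
proof -
  interpret sos_dominated_qm M v
    using assms by unfold_locales
  have "(\<forall>f. alg_hom_real f \<and> (\<forall>m\<in>M. f m \<ge> 0) \<longrightarrow> f a \<ge> 0) \<longleftrightarrow> (\<forall>r\<ge>0. a \<in> qm_closure M v r)"
  proof (intro iffI allI impI)
    fix r :: real
    assume "\<forall>f. alg_hom_real f \<and> (\<forall>m\<in>M. f m \<ge> 0) \<longrightarrow> f a \<ge> 0" "r \<ge> 0"
    then show "a \<in> qm_closure M v r"
      by (intro mem_qm_closure_if_hom_nonneg) auto
  next
    fix f :: "'a \<Rightarrow> real"
    assume a: "\<forall>r\<ge>0. a \<in> qm_closure M v r" and f: "alg_hom_real f \<and> (\<forall>m\<in>M. f m \<ge> 0)"
    then have "f v \<ge> 0"
      using v_sos alg_hom_real_sos_nonneg by blast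
    then show "f a \<ge> 0"
      using a f alg_hom_real_nonneg_if_mem_qm_closure by blast
  qed
  then show ?thesis
    by (simp add: qm_closure_def)
qed

end
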